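(* Let $\lambda\in\mathbb C$ with $\lambda\ne1$ and $\Re(\lambda)>0$, and let $Z$ be a complex random variable with $\mathbb E|Z|<\infty$, $\mathbb EZ\ne0$ and $Z\overset{\mathcal L}{=}e^{-\lambda T}(Z^{(1)}+\dots+Z^{(m)})$, where $Z^{(1)},\dots,Z^{(m)}$ are independent copies of $Z$ independent of $T$. Let $\varphi(t)=\mathbb E e^{i\langle t,Z\rangle}$ ($t\in\mathbb C$) and $\psi(r)=\max_{|t|=r}|\varphi(t)|$ for $r\ge0$. Then $\psi(r)<1$ for every $r>0$.
   Context: $m\ge2$ is an integer. $T=\tau_{(1)}+\dots+\tau_{(m-1)}$ where the $\tau_{(j)}$ are independent and $\tau_{(j)}$ is exponential with parameter $j$. For $x,y\in\mathbb C$, $\langle x,y\rangle=\Re(\overline xy)$. *)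

theory Defs
  imports "HOL-Probability.Probability"
begin

(* characteristic function of a complex random variable Z, with <t,z> = Re (cnj t * z) *)
definition char_fun_C :: "'a measure \<Rightarrow> ('a \<Rightarrow> complex) \<Rightarrow> complex \<Rightarrow> complex" where
  "char_fun_C M Z t = (\<integral>\<omega>. cis (Re (cnj t * Z \<omega>)) \<partial>M)"

(* psi(r) = max_{|t| = r} |phi(t)|, written as a supremum (the max is attained by continuity) *)
definition psi_C :: "'a measure \<Rightarrow> ('a \<Rightarrow> complex) \<Rightarrow> real \<Rightarrow> real" where
  "psi_C M Z r = Sup ((\<lambda>t. cmod (char_fun_C M Z t)) ` {t. cmod t = r})"

end

theory Submission
  imports Defs
begin

text \<open>
  Since the modulus of the characteristic function is continuous, bounded by 1, and circles
  are compact, it suffices to exclude \<open>|\<phi>(t)| = 1\<close> for \<open>t \<noteq> 0\<close>; that equality forces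
  \<open>cis \<langle>t, Z\<rangle>\<close> to be almost surely constant.
  For real \<open>\<lambda> = a\<close>, taking expectations in the fixed-point equation gives
  \<open>E Z = m (\<Prod>j = 1..<m. j / (j + a)) E Z\<close>, and the factor equals 1 only for \<open>a = 1\<close>.
  For non-real \<open>\<lambda>\<close>, split \<open>T = \<tau>\<^sub>1 + T'\<close>: in law \<open>Z = exp (-\<lambda> \<tau>\<^sub>1) Y\<close> with \<open>Y\<close>
  independent of \<open>\<tau>\<^sub>1\<close>, whose density is positive on \<open>(0, \<infinity>)\<close>. So for almost every value
  \<open>y\<close> of \<open>Y\<close>, \<open>cis \<langle>t, exp (-\<lambda> x) y\<rangle>\<close> is constant in \<open>x > 0\<close>. But \<open>exp (-\<lambda> x) y\<close> spirals
  into 0, so this forces \<open>y = 0\<close>; hence \<open>Z = 0\<close> almost surely, contradicting \<open>E Z \<noteq> 0\<close>.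
\<close>

lemma cis_eq_1_imp_zero:
  fixes y :: real
  assumes "cis y = 1" and "\<bar>y\<bar> < 2 * pi"
  shows "y = 0"
proof -
  have "cos y = 1" using assms(1) by (metis cis.sel(1) one_complex.sel(1))
  then obtain n :: int where n: "y = of_int n * 2 * pi" using cos_one_2pi_int by blast
  with assms(2) have "\<bar>of_int n :: real\<bar> < 1" by (simp add: abs_mult)
  then have "n = 0" by linarith
  with n show ?thesis by simp
qed

lemma cis_geometric_const_imp_zero:
  fixes q y :: real
  assumes q: "0 < q" "q < 1" and const: "\<And>N. N \<ge> 1 \<Longrightarrow> cis (q ^ N * y) = c"
  shows "y = 0 \<and> c = 1"
proof -
  have lim: "(\<lambda>N. q ^ N * y) \<longlonglongrightarrow> 0"
    using q by (intro tendsto_mult_left_zero LIMSEQ_power_zero) auto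
  have "(\<lambda>N. cis (q ^ N * y)) \<longlonglongrightarrow> cis 0"
    by (intro tendsto_intros lim)
  moreover have "eventually (\<lambda>N. cis (q ^ N * y) = c) sequentially"
    using const eventually_sequentially by blast
  ultimately have "(\<lambda>N. c) \<longlonglongrightarrow> 1"
    by (simp add: tendsto_cong)
  then have c: "c = 1" by (simp add: LIMSEQ_const_iff)
  from lim obtain N0 where N0: "\<And>N. N \<ge> N0 \<Longrightarrow> \<bar>q ^ N * y\<bar> < 2 * pi"
    by (force simp: LIMSEQ_def dist_real_def)
  define N where "N = max 1 N0"
  have "q ^ N * y = 0"
    by (rule cis_eq_1_imp_zero) (use const[of N] c N0[of N] N_def in auto)
  with q c show ?thesis by simp
qed

lemma Re_mult_exp_neg:
  fixes k l :: complex
  shows "Re (k * exp (- l * of_real x)) =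
    exp (- Re l * x) * (Re k * cos (Im l * x) + Im k * sin (Im l * x))"
  by (simp add: exp_eq_polar cis.ctr algebra_simps)

lemma cis_Re_mult_exp_const_imp_zero:
  fixes k l c :: complex
  assumes l: "Re l > 0" "Im l \<noteq> 0"
    and const: "\<And>x. x > 0 \<Longrightarrow> cis (Re (k * exp (- l * of_real x))) = c"
  shows "k = 0"
proof -
  (* After one turn, of length \<rho>, the spiral has shrunk by the real factor q, so
     Re (k * exp (-l x)) = 0 for all x > 0; a full and a quarter turn then kill Re k and Im k. *)
  define \<rho> where "\<rho> = 2 * pi / \<bar>Im l\<bar>"
  have \<rho>: "\<rho> > 0" using l by (simp add: \<rho>_def)
  define q where "q = exp (- Re l * \<rho>)"
  have q: "0 < q" "q < 1" using l \<rho> by (auto simp: q_def)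
  have Im_l_\<rho>: "\<bar>Im l * \<rho>\<bar> = 2 * pi" using l by (simp add: \<rho>_def abs_mult)
  have period: "exp (- l * of_real (x + real N * \<rho>)) = of_real (q ^ N) * exp (- l * of_real x)" for x N
  proof -
    have "cis (- Im l * \<rho>) = 1"
      using Im_l_\<rho> by (cases "Im l * \<rho> \<ge> 0") (auto simp: complex_eq_iff abs_if)
    then have "exp (- l * of_real \<rho>) = of_real q"
      by (simp add: exp_eq_polar q_def)
    then have "exp (of_nat N * (- l * of_real \<rho>)) = of_real (q ^ N)"
      by (simp only: exp_of_nat_mult) simp
    moreover have "- l * of_real (x + real N * \<rho>) = of_nat N * (- l * of_real \<rho>) + - l * of_real x"
      by (simp add: algebra_simps)
    ultimately show ?thesis by (simp only: exp_add)
  qed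
  have Re_zero: "Re k * cos (Im l * x) + Im k * sin (Im l * x) = 0" if "x > 0" for x
  proof -
    have "Re (k * exp (- l * of_real x)) = 0 \<and> c = 1"
    proof (rule cis_geometric_const_imp_zero[OF q])
      fix N :: nat assume "N \<ge> 1"
      have "x + real N * \<rho> > 0" using \<open>x > 0\<close> \<rho> by (simp add: add_pos_nonneg)
      from const[OF this] show "cis (q ^ N * Re (k * exp (- l * of_real x))) = c"
        unfolding period by (simp add: algebra_simps)
    qed
    then show ?thesis unfolding Re_mult_exp_neg by simp
  qed
  have "Im l * \<rho> = 2 * pi \<or> Im l * \<rho> = - (2 * pi)"
    using Im_l_\<rho> by linarith
  then have "Re k = 0"
    using Re_zero[OF \<rho>] by auto
  moreover have "Im l * (\<rho> / 4) = pi / 2 \<or> Im l * (\<rho> / 4) = - (pi / 2)"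
    using Im_l_\<rho> by linarith
  then have "cos (Im l * (\<rho> / 4)) = 0 \<and> sin (Im l * (\<rho> / 4)) \<noteq> 0"
    by (elim disjE; simp only:; simp)
  then have "Im k = 0"
    using Re_zero[of "\<rho> / 4"] \<rho> by simp
  ultimately show ?thesis by (simp add: complex_eq_iff)
qed

lemma AE_lborel_imp_on_open:
  fixes h :: "real \<Rightarrow> 'b::t2_space"
  assumes AE: "AE x in lborel. x \<in> S \<longrightarrow> h x = c"
    and S: "open S" and h: "continuous_on S h" and x: "x \<in> S"
  shows "h x = c"
proof (rule ccontr)
  assume "h x \<noteq> c"
  have "open (S \<inter> h -` (- {c}))"
    using continuous_open_preimage[OF h S open_Compl[OF closed_singleton]] .
  moreover have "x \<in> S \<inter> h -` (- {c})" using x \<open>h x \<noteq> c\<close> by simp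
  ultimately obtain e where e: "e > 0" "ball x e \<subseteq> S \<inter> h -` (- {c})"
    using open_contains_ball by blast
  have "AE y in lborel. y \<notin> ball x e" using AE by eventually_elim (use e in auto)
  then have "emeasure lborel (ball x e) = 0"
    by (subst AE_iff_measurable[symmetric, where P="\<lambda>y. y \<notin> ball x e"]) auto
  with e(1) show False by (simp add: ball_eq_greaterThanLessThan)
qed

lemma cis_Re_mult_exp_AE_const_imp_zero:
  fixes k l c :: complex
  assumes l: "Re l > 0" "Im l \<noteq> 0"
    and AE: "AE x in lborel. x > 0 \<longrightarrow> cis (Re (k * exp (- l * of_real x))) = c"
  shows "k = 0"
proof (rule cis_Re_mult_exp_const_imp_zero[OF l])
  have "continuous_on {0<..} (\<lambda>x. cis (Re (k * exp (- l * of_real x))))"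
    by (intro continuous_intros)
  moreover from AE have "AE x in lborel. x \<in> {0<..} \<longrightarrow> cis (Re (k * exp (- l * of_real x))) = c"
    by simp
  ultimately show "cis (Re (k * exp (- l * of_real x))) = c" if "x > 0" for x
    using AE_lborel_imp_on_open[OF _ open_greaterThan] that by simp
qed

lemma prod_div_Suc_atLeastLessThan:
  assumes "m \<ge> 1"
  shows "(\<Prod>j\<in>{1..<m}. real j / (real j + 1)) = 1 / real m"
  using assms
proof (induction m rule: dec_induct)
  case (step m)
  then show ?case by (simp add: prod.atLeastLessThan_Suc field_simps)
qed simp

lemma prod_div_add_mult_eq_1_imp:
  fixes a :: real
  assumes a: "a > 0" and m: "m \<ge> 2"
    and eq: "(\<Prod>j\<in>{1..<m}. real j / (real j + a)) * real m = 1"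
  shows "a = 1"
proof (rule ccontr)
  assume "a \<noteq> 1"
  have one: "1 \<in> {1..<m}" using m by simp
  have "(\<Prod>j\<in>{1..<m}. real j / (real j + a)) = 1 / real m"
    using eq m by (simp add: eq_divide_eq mult.commute)
  also have "\<dots> = (\<Prod>j\<in>{1..<m}. real j / (real j + 1))"
    using m by (intro prod_div_Suc_atLeastLessThan[symmetric]) simp
  finally have "(\<Prod>j\<in>{1..<m}. real j / (real j + a)) = (\<Prod>j\<in>{1..<m}. real j / (real j + 1))" .
  moreover consider "a < 1" | "a > 1" using \<open>a \<noteq> 1\<close> by linarith
  then have "(\<Prod>j\<in>{1..<m}. real j / (real j + a)) \<noteq> (\<Prod>j\<in>{1..<m}. real j / (real j + 1))"
  proof cases
    case 1
    then have "(\<Prod>j\<in>{1..<m}. real j / (real j + 1)) < (\<Prod>j\<in>{1..<m}. real j / (real j + a))"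
      using a by (intro prod_mono_strict[OF one]) (auto intro: divide_left_mono)
    then show ?thesis by simp
  next
    case 2
    then have "(\<Prod>j\<in>{1..<m}. real j / (real j + a)) < (\<Prod>j\<in>{1..<m}. real j / (real j + 1))"
      using a by (intro prod_mono_strict[OF one]) (auto intro: divide_left_mono)
    then show ?thesis by simp
  qed
  ultimately show False by blast
qed

lemma exponential_density_mult_exp:
  assumes "l > 0" "a > - l"
  shows "exponential_density l x * exp (- a * x) = l / (l + a) * exponential_density (l + a) x"
  using assms by (simp add: exponential_density_def mult_exp_exp field_simps)

lemma integrable_exponential_density:
  assumes "l > 0"
  shows "integrable lborel (exponential_density l)"
    and "(\<integral>x. exponential_density l x \<partial>lborel) = 1"
proof -
  interpret prob_space "density lborel (exponential_density l)"
    using prob_space_exponential_density[OF assms] .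
  have nonneg: "AE x in lborel. 0 \<le> exponential_density l x"
    using assms by (auto intro: exponential_density_nonneg)
  have meas: "exponential_density l \<in> borel_measurable lborel" by measurable
  have "integrable (density lborel (exponential_density l)) (\<lambda>_. 1::real)" by simp
  then show "integrable lborel (exponential_density l)"
    using integrable_real_density[OF meas nonneg, of "\<lambda>_. 1"] by simp
  have "(\<integral>_. 1 \<partial>density lborel (exponential_density l)) = (1::real)"
    using prob_space by simp
  then show "(\<integral>x. exponential_density l x \<partial>lborel) = 1"
    using integral_real_density[OF meas nonneg, of "\<lambda>_. 1"] by simp
qed

lemma (in prob_space) exponential_distributed_laplace:
  assumes X: "distributed M lborel X (exponential_density l)" and l: "l > 0" and a: "a > - l"
  shows "integrable M (\<lambda>\<omega>. exp (- a * X \<omega>))"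
    and "(\<integral>\<omega>. exp (- a * X \<omega>) \<partial>M) = l / (l + a)"
proof -
  have la: "l + a > 0" using a by simp
  have eq: "(\<lambda>x. exponential_density l x * exp (- a * x)) = (\<lambda>x. l / (l + a) * exponential_density (l + a) x)"
    using exponential_density_mult_exp[OF l a] by simp
  have *: "integrable lborel (\<lambda>x. exponential_density l x * exp (- a * x))"
    "(\<integral>x. exponential_density l x * exp (- a * x) \<partial>lborel) = l / (l + a)"
    unfolding eq using integrable_exponential_density[OF la] by simp_all
  show "integrable M (\<lambda>\<omega>. exp (- a * X \<omega>))"
    using distributed_integrable[OF X, of "\<lambda>x. exp (- a * x)"] * l
    by (simp add: exponential_density_nonneg)
  show "(\<integral>\<omega>. exp (- a * X \<omega>) \<partial>M) = l / (l + a)"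
    using distributed_integral[OF X, of "\<lambda>x. exp (- a * x)"] * l
    by (simp add: exponential_density_nonneg)
qed

lemma borel_measurable_cis[measurable]:
  fixes f :: "'a \<Rightarrow> real"
  assumes "f \<in> borel_measurable M"
  shows "(\<lambda>x. cis (f x)) \<in> borel_measurable M"
  using measurable_compose[OF assms borel_measurable_continuous_onI[OF continuous_on_cis[OF continuous_on_id]]]
  by (simp add: comp_def)

lemma complex_eq_1_if_Re_eq_1:
  fixes u :: complex
  assumes "cmod u \<le> 1" "Re u = 1"
  shows "u = 1"
proof -
  have "(Re u)\<^sup>2 + (Im u)\<^sup>2 \<le> 1" using assms(1) by (simp add: cmod_def)
  with assms(2) have "Im u = 0" by simp
  with assms(2) show ?thesis by (simp add: complex_eq_iff)
qed

lemma (in prob_space) AE_eq_integral_if_norm_integral_eq_1: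
  fixes U :: "'a \<Rightarrow> complex"
  assumes [measurable]: "U \<in> borel_measurable M"
    and bound: "\<And>\<omega>. \<omega> \<in> space M \<Longrightarrow> cmod (U \<omega>) \<le> 1"
    and norm_1: "cmod (\<integral>\<omega>. U \<omega> \<partial>M) = 1"
  shows "AE \<omega> in M. U \<omega> = (\<integral>\<omega>. U \<omega> \<partial>M)"
proof -
  define c where "c = (\<integral>\<omega>. U \<omega> \<partial>M)"
  have U_int: "integrable M U"
    using bound by (intro integrable_const_bound[where B=1]) auto
  have "cnj c * c = 1"
    using norm_1 complex_norm_square[of c] by (simp add: c_def mult.commute)
  have le_1: "Re (cnj c * U \<omega>) \<le> 1" if "\<omega> \<in> space M" for \<omega>
    using complex_Re_le_cmod[of "cnj c * U \<omega>"] bound[OF that] norm_1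
    by (simp add: c_def norm_mult)
  have int: "integrable M (\<lambda>\<omega>. 1 - Re (cnj c * U \<omega>))"
    using U_int by auto
  have "(\<integral>\<omega>. 1 - Re (cnj c * U \<omega>) \<partial>M) = 1 - Re (cnj c * c)"
    using U_int by (simp add: prob_space c_def)
  also have "\<dots> = 0" using \<open>cnj c * c = 1\<close> by simp
  finally have "AE \<omega> in M. 1 - Re (cnj c * U \<omega>) = 0"
    using integral_nonneg_eq_0_iff_AE[OF int] le_1 by simp
  then have "AE \<omega> in M. U \<omega> = c"
  proof (rule AE_mp, intro AE_I2 impI)
    fix \<omega> assume \<omega>: "\<omega> \<in> space M" and "1 - Re (cnj c * U \<omega>) = 0"
    then have "cnj c * U \<omega> = 1"
      using bound[OF \<omega>] norm_1 by (intro complex_eq_1_if_Re_eq_1) (auto simp: c_def norm_mult)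
    then have "c * (cnj c * U \<omega>) = c" by simp
    then show "U \<omega> = c"
      using \<open>cnj c * c = 1\<close> by (simp add: mult.assoc[symmetric] mult.commute[of c])
  qed
  then show ?thesis by (simp add: c_def)
qed

lemma (in prob_space) norm_char_fun_C_le_1:
  assumes "Z \<in> borel_measurable M"
  shows "cmod (char_fun_C M Z t) \<le> 1"
proof -
  have "cmod (char_fun_C M Z t) \<le> (\<integral>\<omega>. norm (cis (Re (cnj t * Z \<omega>))) \<partial>M)"
    unfolding char_fun_C_def by (rule integral_norm_bound)
  also have "\<dots> = 1" by (simp add: prob_space)
  finally show ?thesis .
qed

lemma (in prob_space) isCont_char_fun_C:
  assumes [measurable]: "Z \<in> borel_measurable M"
  shows "isCont (char_fun_C M Z) t"
  unfolding continuous_at_sequentially comp_def char_fun_C_def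
proof safe
  fix X assume "X \<longlonglongrightarrow> t"
  then show "(\<lambda>n. \<integral>\<omega>. cis (Re (cnj (X n) * Z \<omega>)) \<partial>M) \<longlonglongrightarrow> (\<integral>\<omega>. cis (Re (cnj t * Z \<omega>)) \<partial>M)"
    by (intro integral_dominated_convergence[where w="\<lambda>_. 1"]) (auto intro!: tendsto_intros)
qed

lemma (in prob_space) AE_cis_eq_char_fun_C:
  assumes [measurable]: "Z \<in> borel_measurable M"
    and "cmod (char_fun_C M Z t) = 1"
  shows "AE \<omega> in M. cis (Re (cnj t * Z \<omega>)) = char_fun_C M Z t"
  using assms unfolding char_fun_C_def by (intro AE_eq_integral_if_norm_integral_eq_1) auto

lemma (in prob_space) psi_C_less_1:
  assumes "Z \<in> borel_measurable M"
    and norm_ne_1: "\<And>t. t \<noteq> 0 \<Longrightarrow> cmod (char_fun_C M Z t) \<noteq> 1"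
    and r: "r > 0"
  shows "psi_C M Z r < 1"
proof -
  have sphere: "{t. cmod t = r} = sphere 0 r" by auto
  have "compact (sphere (0::complex) r)" by simp
  moreover have "sphere (0::complex) r \<noteq> {}" using r by simp
  moreover have "continuous_on (sphere 0 r) (\<lambda>t. cmod (char_fun_C M Z t))"
    by (intro continuous_at_imp_continuous_on ballI isCont_norm isCont_char_fun_C assms)
  ultimately obtain t where t: "t \<in> sphere 0 r"
    and max: "\<And>s. s \<in> sphere 0 r \<Longrightarrow> cmod (char_fun_C M Z s) \<le> cmod (char_fun_C M Z t)"
    by (metis continuous_attains_sup)
  have "psi_C M Z r = cmod (char_fun_C M Z t)"
    unfolding psi_C_def sphere by (rule cSup_eq_maximum) (use t max in blast)+
  moreover have "t \<noteq> 0" using t r by auto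
  ultimately show ?thesis
    using norm_ne_1[of t] norm_char_fun_C_le_1[OF assms(1), of t] by simp
qed

lemma (in prob_space) indep_var_blocks:
  assumes "indep_vars (\<lambda>_. N) X I" "A \<inter> B = {}" "A \<subseteq> I" "B \<subseteq> I"
    and "g \<in> measurable (PiM A (\<lambda>_. N)) N1" "h \<in> measurable (PiM B (\<lambda>_. N)) N2"
  shows "indep_var N1 (\<lambda>\<omega>. g (\<lambda>i\<in>A. X i \<omega>)) N2 (\<lambda>\<omega>. h (\<lambda>i\<in>B. X i \<omega>))"
  using indep_var_compose[OF indep_var_restrict[OF assms(1-4)] assms(5,6)] by (simp add: comp_def)

lemma AE_iff_if_distr_eq:
  assumes "X \<in> measurable M N" "Y \<in> measurable M N" "distr M N X = distr M N Y"
    and "Measurable.pred N P"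
  shows "(AE \<omega> in M. P (X \<omega>)) \<longleftrightarrow> (AE \<omega> in M. P (Y \<omega>))"
  using AE_distr_iff[OF assms(1), of P] AE_distr_iff[OF assms(2), of P] assms(3,4)
  unfolding pred_def by metis

lemma
  fixes X Y :: "'a \<Rightarrow> 'b::{banach, second_countable_topology}"
  assumes [measurable]: "X \<in> borel_measurable M" "Y \<in> borel_measurable M"
    and distr_eq: "distr M borel X = distr M borel Y"
  shows integrable_iff_if_distr_eq: "integrable M X \<longleftrightarrow> integrable M Y"
    and integral_eq_if_distr_eq: "(\<integral>\<omega>. X \<omega> \<partial>M) = (\<integral>\<omega>. Y \<omega> \<partial>M)"
proof -
  have "integrable M X \<longleftrightarrow> integrable (distr M borel X) (\<lambda>x. x)"
    by (simp add: integrable_distr_eq)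
  also have "\<dots> \<longleftrightarrow> integrable M Y"
    by (simp add: distr_eq integrable_distr_eq)
  finally show "integrable M X \<longleftrightarrow> integrable M Y" .
  have "(\<integral>\<omega>. X \<omega> \<partial>M) = (\<integral>x. x \<partial>distr M borel X)"
    by (simp add: integral_distr)
  also have "\<dots> = (\<integral>\<omega>. Y \<omega> \<partial>M)"
    by (simp add: distr_eq integral_distr)
  finally show "(\<integral>\<omega>. X \<omega> \<partial>M) = (\<integral>\<omega>. Y \<omega> \<partial>M)" .
qed

lemma (in prob_space) AE_AE_if_indep_var:
  assumes indep: "indep_var N1 Y N2 V"
    and Q: "Measurable.pred (N1 \<Otimes>\<^sub>M N2) (\<lambda>p. Q (fst p) (snd p))"
    and AE: "AE \<omega> in M. Q (Y \<omega>) (V \<omega>)"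
  shows "AE y in distr M N1 Y. AE z in distr M N2 V. Q y z"
proof -
  have [measurable]: "Y \<in> measurable M N1" "V \<in> measurable M N2"
    using indep_var_rv1[OF indep] indep_var_rv2[OF indep] by auto
  have joint: "distr M N1 Y \<Otimes>\<^sub>M distr M N2 V = distr M (N1 \<Otimes>\<^sub>M N2) (\<lambda>\<omega>. (Y \<omega>, V \<omega>))"
    using indep indep_var_distribution_eq by blast
  have pair: "pair_sigma_finite (distr M N1 Y) (distr M N2 V)"
    by (intro pair_sigma_finite.intro prob_space_imp_sigma_finite prob_space_distr) simp_all
  have sets_eq: "sets (distr M N1 Y \<Otimes>\<^sub>M distr M N2 V) = sets (N1 \<Otimes>\<^sub>M N2)"
    by (intro sets_pair_measure_cong) simp_all
  from Q have Q_distr: "Measurable.pred (distr M N1 Y \<Otimes>\<^sub>M distr M N2 V) (\<lambda>p. Q (fst p) (snd p))"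
    unfolding measurable_cong_sets[OF sets_eq refl] .
  have "AE p in distr M (N1 \<Otimes>\<^sub>M N2) (\<lambda>\<omega>. (Y \<omega>, V \<omega>)). Q (fst p) (snd p)"
    using AE Q by (subst AE_distr_iff) (simp_all add: pred_def)
  then show ?thesis
    unfolding joint[symmetric] using pair_sigma_finite.AE_pair_iff[OF pair] Q_distr
    by (simp add: pred_def)
qed

lemma (in prob_space) AE_lborel_pos_if_AE_exponential:
  assumes X: "distributed M lborel X (exponential_density l)" and l: "l > 0"
    and P: "Measurable.pred borel P" and AE: "AE \<omega> in M. P (X \<omega>)"
  shows "AE x in lborel. x > 0 \<longrightarrow> P x"
proof -
  have "distr M borel X = distr M lborel X"
    by (rule distr_cong) simp_all
  with distributed_distr_eq_density[OF X]
  have distr_X: "distr M borel X = density lborel (exponential_density l)" by simp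
  have "AE x in distr M borel X. P x"
    using AE P distributed_measurable[OF X] by (subst AE_distr_iff) (simp_all add: pred_def)
  then have "AE x in lborel. 0 < exponential_density l x \<longrightarrow> P x"
    unfolding distr_X by (subst (asm) AE_density) simp_all
  moreover have "0 < exponential_density l x" if "x > 0" for x
    using l that by (simp add: exponential_density_def)
  ultimately show ?thesis
    by (elim eventually_mono) simp
qed

lemma (in prob_space) AE_AE_pos_if_indep_exponential:
  fixes Y :: "'a \<Rightarrow> complex" and X :: "'a \<Rightarrow> real"
  assumes indep: "indep_var borel Y borel (\<lambda>\<omega>. complex_of_real (X \<omega>))"
    and X: "distributed M lborel X (exponential_density l)" and l: "l > 0"
    and Q: "Measurable.pred (borel \<Otimes>\<^sub>M borel) (\<lambda>p. Q (fst p) (snd p))"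
    and AE: "AE \<omega> in M. Q (Y \<omega>) (X \<omega>)"
  shows "AE y in distr M borel Y. AE x in lborel. x > 0 \<longrightarrow> Q y x"
proof -
  have [measurable]: "X \<in> borel_measurable M"
    using distributed_measurable[OF X] by simp
  have Q_Re: "Measurable.pred (borel \<Otimes>\<^sub>M borel) (\<lambda>p::complex \<times> complex. Q (fst p) (Re (snd p)))"
  proof -
    have "(\<lambda>p::complex \<times> complex. (fst p, Re (snd p))) \<in> measurable (borel \<Otimes>\<^sub>M borel) (borel \<Otimes>\<^sub>M borel)"
      by measurable
    from measurable_compose[OF this Q] show ?thesis by simp
  qed
  from AE have "AE \<omega> in M. Q (Y \<omega>) (Re (complex_of_real (X \<omega>)))" by simp
  from AE_AE_if_indep_var[OF indep Q_Re this]
  have "AE y in distr M borel Y. AE z in distr M borel (\<lambda>\<omega>. complex_of_real (X \<omega>)). Q y (Re z)" .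
  then show ?thesis
  proof eventually_elim
    case (elim y)
    have Q_y: "Measurable.pred borel (\<lambda>z. Q y (Re z))"
      using measurable_compose[OF measurable_Pair1' Q_Re, of y] by simp
    have "Measurable.pred borel (Q y)"
      using measurable_compose[OF measurable_Pair1' Q, of y] by simp
    moreover from elim Q_y have "AE \<omega> in M. Q y (X \<omega>)"
      by (subst (asm) AE_distr_iff) (simp_all add: pred_def)
    ultimately show ?case
      by (rule AE_lborel_pos_if_AE_exponential[OF X l])
  qed
qed

locale smoothing_fixed_point = prob_space M for M :: "'a measure" +
  fixes m :: nat and lam :: complex and tau :: "nat \<Rightarrow> 'a \<Rightarrow> real" and T :: "'a \<Rightarrow> real"
    and Zs :: "nat \<Rightarrow> 'a \<Rightarrow> complex" and Z :: "'a \<Rightarrow> complex"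
  assumes two_le_m: "m \<ge> 2"
    and tau_exponential: "\<And>j. j \<in> {1..<m} \<Longrightarrow> distributed M lborel (tau j) (exponential_density (real j))"
    and T_eq: "\<And>\<omega>. T \<omega> = (\<Sum>j\<in>{1..<m}. tau j \<omega>)"
    and indep: "indep_vars (\<lambda>_. borel)
      (\<lambda>k \<omega>. case k of Inl j \<Rightarrow> complex_of_real (tau j \<omega>) | Inr i \<Rightarrow> Zs i \<omega>)
      (Inl ` {1..<m} \<union> Inr ` {1..m})"
    and Z_measurable[measurable]: "Z \<in> borel_measurable M"
    and distr_Zs: "\<And>i. i \<in> {1..m} \<Longrightarrow> distr M borel (Zs i) = distr M borel Z"
    and distr_fixed_point: "distr M borel Z =
      distr M borel (\<lambda>\<omega>. exp (- lam * complex_of_real (T \<omega>)) * (\<Sum>i\<in>{1..m}. Zs i \<omega>))"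
begin

definition coord :: "nat + nat \<Rightarrow> 'a \<Rightarrow> complex" where
  "coord k \<omega> = (case k of Inl j \<Rightarrow> complex_of_real (tau j \<omega>) | Inr i \<Rightarrow> Zs i \<omega>)"

definition sum_Zs :: "'a \<Rightarrow> complex" where
  "sum_Zs \<omega> = (\<Sum>i\<in>{1..m}. Zs i \<omega>)"

lemma coord_Inl[simp]: "coord (Inl j) = (\<lambda>\<omega>. complex_of_real (tau j \<omega>))"
  and coord_Inr[simp]: "coord (Inr i) = Zs i"
  by (simp_all add: coord_def[abs_def])

lemma indep_coord: "indep_vars (\<lambda>_. borel) coord (Inl ` {1..<m} \<union> Inr ` {1..m})"
  using indep by (simp add: coord_def[abs_def])

lemma tau_measurable[measurable]: "j \<in> {1..<m} \<Longrightarrow> tau j \<in> borel_measurable M"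
  using distributed_measurable[OF tau_exponential] by simp

lemma Zs_measurable[measurable]:
  assumes "i \<in> {1..m}"
  shows "Zs i \<in> borel_measurable M"
proof -
  have "coord (Inr i) \<in> borel_measurable M"
    using indep_coord assms unfolding indep_vars_def by blast
  then show ?thesis by simp
qed

lemma T_measurable[measurable]: "T \<in> borel_measurable M"
  unfolding T_eq[abs_def] by measurable

lemma sum_Zs_measurable[measurable]: "sum_Zs \<in> borel_measurable M"
  unfolding sum_Zs_def[abs_def] by measurable

lemma indep_var_coord_blocks:
  assumes "A \<inter> B = {}" "A \<subseteq> Inl ` {1..<m} \<union> Inr ` {1..m}" "B \<subseteq> Inl ` {1..<m} \<union> Inr ` {1..m}"
    and "g \<in> borel_measurable (PiM A (\<lambda>_. borel))" "h \<in> borel_measurable (PiM B (\<lambda>_. borel))"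
  shows "indep_var borel (\<lambda>\<omega>. g (\<lambda>k\<in>A. coord k \<omega>)) borel (\<lambda>\<omega>. h (\<lambda>k\<in>B. coord k \<omega>))"
  using indep_var_blocks[OF indep_coord assms] .

lemma indep_exp_T_sum_Zs: "indep_var borel (\<lambda>\<omega>. exp (- lam * complex_of_real (T \<omega>))) borel sum_Zs"
proof -
  have "indep_var borel (\<lambda>\<omega>. (\<lambda>f. exp (- lam * (\<Sum>j\<in>{1..<m}. f (Inl j)))) (\<lambda>k\<in>Inl ` {1..<m}. coord k \<omega>))
      borel (\<lambda>\<omega>. (\<lambda>f. \<Sum>i\<in>{1..m}. f (Inr i)) (\<lambda>k\<in>Inr ` {1..m}. coord k \<omega>))"
    by (rule indep_var_coord_blocks) auto
  then show ?thesis
    by (simp add: T_eq sum_Zs_def[abs_def])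
qed

lemma indep_tail_tau1:
  "indep_var borel (\<lambda>\<omega>. exp (- lam * complex_of_real (\<Sum>j\<in>{2..<m}. tau j \<omega>)) * sum_Zs \<omega>)
     borel (\<lambda>\<omega>. complex_of_real (tau 1 \<omega>))"
proof -
  have "indep_var
      borel (\<lambda>\<omega>. (\<lambda>f. exp (- lam * (\<Sum>j\<in>{2..<m}. f (Inl j))) * (\<Sum>i\<in>{1..m}. f (Inr i)))
        (\<lambda>k\<in>Inl ` {2..<m} \<union> Inr ` {1..m}. coord k \<omega>))
      borel (\<lambda>\<omega>. (\<lambda>f. f (Inl 1)) (\<lambda>k\<in>{Inl 1}. coord k \<omega>))"
    using two_le_m by (intro indep_var_coord_blocks) auto
  then show ?thesis
    by (simp add: sum_Zs_def[abs_def])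
qed

lemma distr_Z_eq: "distr M borel Z = distr M borel (\<lambda>\<omega>. exp (- lam * complex_of_real (T \<omega>)) * sum_Zs \<omega>)"
  using distr_fixed_point by (simp add: sum_Zs_def[abs_def])

lemma exp_T_split:
  "exp (- lam * complex_of_real (T \<omega>)) =
    exp (- lam * complex_of_real (tau 1 \<omega>)) * exp (- lam * complex_of_real (\<Sum>j\<in>{2..<m}. tau j \<omega>))"
proof -
  have "{1..<m} = insert 1 {2..<m}" using two_le_m by auto
  then have "T \<omega> = tau 1 \<omega> + (\<Sum>j\<in>{2..<m}. tau j \<omega>)" by (simp add: T_eq)
  then show ?thesis by (simp add: exp_add[symmetric] algebra_simps)
qed

lemma integral_exp_neg_T:
  assumes a: "a > 0"
  shows "integrable M (\<lambda>\<omega>. exp (- a * T \<omega>))"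
    and "(\<integral>\<omega>. exp (- a * T \<omega>) \<partial>M) = (\<Prod>j\<in>{1..<m}. real j / (real j + a))"
proof -
  define X where "X = (\<lambda>k \<omega>. exp (- a * Re (coord k \<omega>)))"
  have indep_X: "indep_vars (\<lambda>_. borel) X (Inl ` {1..<m})"
    unfolding X_def by (rule indep_vars_compose2[OF indep_vars_subset[OF indep_coord]]) auto
  have laplace: "integrable M (X (Inl j))" "(\<integral>\<omega>. X (Inl j) \<omega> \<partial>M) = real j / (real j + a)"
    if "j \<in> {1..<m}" for j
    using exponential_distributed_laplace[OF tau_exponential[OF that]] that a by (simp_all add: X_def)
  have prod: "(\<lambda>\<omega>. exp (- a * T \<omega>)) = (\<lambda>\<omega>. \<Prod>k\<in>Inl ` {1..<m}. X k \<omega>)"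
    by (simp add: T_eq X_def prod.reindex exp_sum sum_distrib_left)
  show "integrable M (\<lambda>\<omega>. exp (- a * T \<omega>))"
    unfolding prod using laplace by (intro indep_vars_integrable[OF _ indep_X]) auto
  have "(\<integral>\<omega>. exp (- a * T \<omega>) \<partial>M) = (\<Prod>k\<in>Inl ` {1..<m}. \<integral>\<omega>. X k \<omega> \<partial>M)"
    unfolding prod using laplace by (intro indep_vars_lebesgue_integral[OF _ indep_X]) auto
  also have "\<dots> = (\<Prod>j\<in>{1..<m}. real j / (real j + a))"
    using laplace by (simp add: prod.reindex)
  finally show "(\<integral>\<omega>. exp (- a * T \<omega>) \<partial>M) = (\<Prod>j\<in>{1..<m}. real j / (real j + a))" .
qed

lemma integrable_Zs:
  assumes "integrable M Z" "i \<in> {1..m}"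
  shows "integrable M (Zs i)" and "(\<integral>\<omega>. Zs i \<omega> \<partial>M) = (\<integral>\<omega>. Z \<omega> \<partial>M)"
  using assms integrable_iff_if_distr_eq[OF _ _ distr_Zs] integral_eq_if_distr_eq[OF _ _ distr_Zs]
  by simp_all

lemma lam_eq_1_if_real:
  assumes lam: "Im lam = 0" "Re lam > 0"
    and Z: "integrable M Z" "(\<integral>\<omega>. Z \<omega> \<partial>M) \<noteq> 0"
  shows "lam = 1"
proof -
  define a where "a = Re lam"
  have a: "a > 0" using lam by (simp add: a_def)
  have exp_lam: "exp (- lam * complex_of_real x) = complex_of_real (exp (- a * x))" for x
  proof -
    have "- lam * complex_of_real x = complex_of_real (- a * x)"
      using lam by (simp add: a_def complex_eq_iff)
    then show ?thesis by (simp only: exp_of_real)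
  qed
  have indep_exp: "indep_var borel (\<lambda>\<omega>. complex_of_real (exp (- a * T \<omega>))) borel sum_Zs"
    using indep_exp_T_sum_Zs unfolding exp_lam .
  have int_sum: "integrable M sum_Zs"
    unfolding sum_Zs_def[abs_def] using integrable_Zs(1)[OF Z(1)]
    by (intro Bochner_Integration.integrable_sum) auto
  have E_sum: "(\<integral>\<omega>. sum_Zs \<omega> \<partial>M) = of_nat m * (\<integral>\<omega>. Z \<omega> \<partial>M)"
    unfolding sum_Zs_def[abs_def] using integrable_Zs[OF Z(1)]
    by (subst Bochner_Integration.integral_sum) auto
  have "(\<integral>\<omega>. Z \<omega> \<partial>M) = (\<integral>\<omega>. complex_of_real (exp (- a * T \<omega>)) * sum_Zs \<omega> \<partial>M)"
    using integral_eq_if_distr_eq[OF _ _ distr_Z_eq] unfolding exp_lam by simp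
  also have "\<dots> = complex_of_real (\<integral>\<omega>. exp (- a * T \<omega>) \<partial>M) * (\<integral>\<omega>. sum_Zs \<omega> \<partial>M)"
    using indep_var_lebesgue_integral[OF indep_exp] integral_exp_neg_T(1)[OF a] int_sum by simp
  also have "\<dots> = complex_of_real ((\<Prod>j\<in>{1..<m}. real j / (real j + a)) * real m) * (\<integral>\<omega>. Z \<omega> \<partial>M)"
    using integral_exp_neg_T(2)[OF a] E_sum by simp
  finally have "(\<Prod>j\<in>{1..<m}. real j / (real j + a)) * real m = 1"
    using Z(2) by (metis mult_cancel_right1 of_real_eq_1_iff)
  then have "a = 1" using prod_div_add_mult_eq_1_imp a two_le_m by blast
  with lam show ?thesis by (simp add: a_def complex_eq_iff)
qed

lemma AE_Z_eq_0_if_norm_char_fun_C_eq_1: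
  assumes lam: "Re lam > 0" "Im lam \<noteq> 0"
    and t: "t \<noteq> 0" "cmod (char_fun_C M Z t) = 1"
  shows "AE \<omega> in M. Z \<omega> = 0"
proof -
  define c where "c = char_fun_C M Z t"
  define Y where "Y \<omega> = exp (- lam * complex_of_real (\<Sum>j\<in>{2..<m}. tau j \<omega>)) * sum_Zs \<omega>" for \<omega>
  define Q where "Q y x \<longleftrightarrow> cis (Re (cnj t * y * exp (- lam * complex_of_real x))) = c" for y x
  have [measurable]: "Y \<in> borel_measurable M"
    using two_le_m unfolding Y_def by measurable
  have rhs: "exp (- lam * complex_of_real (T \<omega>)) * sum_Zs \<omega> = exp (- lam * complex_of_real (tau 1 \<omega>)) * Y \<omega>" for \<omega>
    unfolding exp_T_split Y_def by (simp only: mult.assoc)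
  have rhs_measurable: "(\<lambda>\<omega>. exp (- lam * complex_of_real (T \<omega>)) * sum_Zs \<omega>) \<in> borel_measurable M"
    by measurable
  have "AE \<omega> in M. cis (Re (cnj t * Z \<omega>)) = c"
    using AE_cis_eq_char_fun_C[OF Z_measurable t(2)] by (simp add: c_def)
  moreover have "Measurable.pred borel (\<lambda>z. cis (Re (cnj t * z)) = c)" by measurable
  ultimately have "AE \<omega> in M. cis (Re (cnj t * (exp (- lam * complex_of_real (T \<omega>)) * sum_Zs \<omega>))) = c"
    using AE_iff_if_distr_eq[OF Z_measurable rhs_measurable distr_Z_eq] by blast
  then have "AE \<omega> in M. Q (Y \<omega>) (tau 1 \<omega>)"
    unfolding rhs Q_def by (simp only: mult_ac)
  then have "AE y in distr M borel Y. AE x in lborel. x > 0 \<longrightarrow> Q y x"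
    using two_le_m
    by (intro AE_AE_pos_if_indep_exponential[OF indep_tail_tau1[folded Y_def] tau_exponential])
       (auto simp: Q_def)
  then have "AE y in distr M borel Y. y = 0"
  proof eventually_elim
    case (elim y)
    then have "cnj t * y = 0"
      by (intro cis_Re_mult_exp_AE_const_imp_zero[OF lam, of _ c]) (simp add: Q_def)
    with t(1) show "y = 0" by simp
  qed
  then have "AE \<omega> in M. Y \<omega> = 0"
    by (subst (asm) AE_distr_iff) auto
  then have "AE \<omega> in M. exp (- lam * complex_of_real (T \<omega>)) * sum_Zs \<omega> = 0"
    unfolding rhs by (auto elim: eventually_mono)
  then show ?thesis
    using AE_iff_if_distr_eq[OF Z_measurable rhs_measurable distr_Z_eq, of "\<lambda>z. z = 0"] by simp
qed

theorem fixed_point_psi_C_less_1: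
  assumes "lam \<noteq> 1" "Re lam > 0" "integrable M Z" "(\<integral>\<omega>. Z \<omega> \<partial>M) \<noteq> 0" "r > 0"
  shows "psi_C M Z r < 1"
proof (rule psi_C_less_1[OF Z_measurable _ \<open>r > 0\<close>])
  have "Im lam \<noteq> 0" using lam_eq_1_if_real assms(1-4) by blast
  fix t :: complex assume "t \<noteq> 0"
  show "cmod (char_fun_C M Z t) \<noteq> 1"
  proof
    assume "cmod (char_fun_C M Z t) = 1"
    with \<open>Im lam \<noteq> 0\<close> \<open>t \<noteq> 0\<close> assms(2) have "AE \<omega> in M. Z \<omega> = 0"
      by (intro AE_Z_eq_0_if_norm_char_fun_C_eq_1)
    then have "(\<integral>\<omega>. Z \<omega> \<partial>M) = 0" by (rule integral_eq_zero_AE)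
    with assms(4) show False by simp
  qed
qed

end

theorem lemma7p2:
  fixes M :: "'a measure" and m :: nat and lam :: complex
    and tau :: "nat \<Rightarrow> 'a \<Rightarrow> real" and T :: "'a \<Rightarrow> real"
    and Zs :: "nat \<Rightarrow> 'a \<Rightarrow> complex" and Z :: "'a \<Rightarrow> complex"
  assumes "prob_space M"
    and "m \<ge> 2"
    and "lam \<noteq> 1" and "Re lam > 0"
    and "\<And>j. j \<in> {1..<m} \<Longrightarrow> distributed M lborel (tau j) (exponential_density (real j))"
    and "\<And>\<omega>. T \<omega> = (\<Sum>j\<in>{1..<m}. tau j \<omega>)"
    and "prob_space.indep_vars M (\<lambda>_. borel)
           (\<lambda>k \<omega>. case k of Inl j \<Rightarrow> complex_of_real (tau j \<omega>) | Inr i \<Rightarrow> Zs i \<omega>)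
           (Inl ` {1..<m} \<union> Inr ` {1..m})"
    and "Z \<in> borel_measurable M"
    and "\<And>i. i \<in> {1..m} \<Longrightarrow> distr M borel (Zs i) = distr M borel Z"
    and "integrable M Z"
    and "(\<integral>\<omega>. Z \<omega> \<partial>M) \<noteq> 0"
    and "distr M borel Z = distr M borel (\<lambda>\<omega>. exp (- lam * complex_of_real (T \<omega>)) * (\<Sum>i\<in>{1..m}. Zs i \<omega>))"
  shows "\<forall>r>0. psi_C M Z r < 1"
proof -
  interpret smoothing_fixed_point M m lam tau T Zs Z
    by (intro smoothing_fixed_point.intro smoothing_fixed_point_axioms.intro) (fact assms)+
  show ?thesis
    using fixed_point_psi_C_less_1[OF assms(3,4,10,11)] by blast
qed

end
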